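(* For $n=2$ threads, in the limit $m\to\infty$, the probability $\Pr[A]$ that the canonical race does not manifest satisfies: under Sequential Consistency, $\Pr[A]=1/6$; under Weak Ordering, $\Pr[A]=7/54\approx 0.1296$; under Total Store Order, $0.1315<\Pr[A]<0.1369$ (more precisely $58/441<\Pr[A]<58/441+1/189$).
   Context: Fix $m\ge 1$. A random program is a sequence $x_1,\dots,x_{m+2}$ of memory operations, each with a type in $\{\mathrm{LD},\mathrm{ST}\}$: $x_1,\dots,x_m$ have i.i.d. types, each $\mathrm{ST}$ with probability $1/2$ and $\mathrm{LD}$ with probability $1/2$; $x_{m+1}$ (the critical load) has type $\mathrm{LD}$ and $x_{m+2}$ (the critical store) has type $\mathrm{ST}$. The initial order is $S_0=(x_1,\dots,x_{m+2})$. A memory model is specified by the set of ordered type pairs $(\tau_1,\tau_2)$ for which an instruction of type $\tau_2$ may be moved ahead of an immediately preceding instruction of type $\tau_1$: Sequential Consistency (SC) allows no pair; Total Store Order (TSO) allows only the pair $(\mathrm{ST},\mathrm{LD})$ (a load may move ahead of a preceding store); Weak Ordering (WO) allows all four pairs. The settling process runs rounds $r=1,\dots,m+2$. Before round $r$, the current order $S_{r-1}$ consists of $x_1,\dots,x_{r-1}$ in some order in positions $1,\dots,r-1$, followed by $x_r,\dots,x_{m+2}$ in positions $r,\dots,m+2$. In round $r$, instruction $x_r$ (starting at position $r$) repeatedly attempts to swap with the instruction immediately preceding it in the current order: the attempt fails automatically if the pair (type of the preceding instruction, type of $x_r$) is not allowed by the memory model, or if $x_r$ is the critical store and the preceding instruction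 is the critical load; otherwise the attempt succeeds independently with probability $1/2$. The round ends when an attempt fails or $x_r$ reaches position $1$; the resulting order is $S_r$. The final order is $S_{m+2}$. Combined model with $n$ threads: generate one random program, then apply the settling process independently to $n$ copies of it (threads $T_1,\dots,T_n$), all under the same memory model. For thread $k$, let $\gamma_k$ be the number of instructions strictly between the critical load and the critical store in its final order, and $\Gamma_k=\gamma_k+2$. Let $s_1,\dots,s_n$ be i.i.d. shifts, independent of everything else, with $\Pr[s_k=j]=2^{-(j+1)}$ for $j\ge0$. $A$ is the event that the closed intervals $[s_k,s_k+\Gamma_k]$, $k=1,\dots,n$, are pairwise disjoint (the race does not manifest). *)

theory Defs
  imports "HOL-Probability.Probability"
begin

datatype optype = LD | ST

datatype memmodel = SC | TSO | WO

text \<open>allowed M t1 t2: an instruction of type t2 may move ahead of an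
  immediately preceding instruction of type t1.\<close>
fun allowed :: "memmodel \<Rightarrow> optype \<Rightarrow> optype \<Rightarrow> bool" where
  "allowed SC _ _ = False"
| "allowed TSO t1 t2 = (t1 = ST \<and> t2 = LD)"
| "allowed WO _ _ = True"

text \<open>Instructions x_1..x_{m+2} are indexed 0..m+1; index m is the critical
  load, index m+1 the critical store. A program is given by the list of the
  types of x_1..x_m.\<close>
definition prog_type :: "nat \<Rightarrow> optype list \<Rightarrow> nat \<Rightarrow> optype" where
  "prog_type m xs i = (if i < m then xs ! i else if i = m then LD else ST)"

definition random_prog :: "nat \<Rightarrow> optype list pmf" where
  "random_prog m = replicate_pmf m (map_pmf (\<lambda>b. if b then ST else LD) (bernoulli_pmf (1/2)))"

definition can_swap :: "memmodel \<Rightarrow> nat \<Rightarrow> optype list \<Rightarrow> nat \<Rightarrow> nat \<Rightarrow> bool" where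
  "can_swap M m xs y x =
     (allowed M (prog_type m xs y) (prog_type m xs x) \<and> \<not> (x = m + 1 \<and> y = m))"

text \<open>One round: instruction x moves into the already settled prefix, given
  in reversed order (head = immediately preceding instruction). Returns the new
  prefix in normal order.\<close>
fun move :: "(nat \<Rightarrow> nat \<Rightarrow> bool) \<Rightarrow> nat \<Rightarrow> nat list \<Rightarrow> nat list pmf" where
  "move can x [] = return_pmf [x]"
| "move can x (y # ys) =
     (if can y x then
        bernoulli_pmf (1/2) \<bind>
          (\<lambda>b. if b then map_pmf (\<lambda>l. l @ [y]) (move can x ys)
               else return_pmf (rev (y # ys) @ [x]))
      else return_pmf (rev (y # ys) @ [x]))"

fun settle :: "(nat \<Rightarrow> nat \<Rightarrow> bool) \<Rightarrow> nat \<Rightarrow> nat list pmf" where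
  "settle can 0 = return_pmf []"
| "settle can (Suc r) = settle can r \<bind> (\<lambda>pre. move can r (rev pre))"

definition final_order :: "memmodel \<Rightarrow> nat \<Rightarrow> optype list \<Rightarrow> nat list pmf" where
  "final_order M m xs = settle (can_swap M m xs) (m + 2)"

text \<open>Number of instructions strictly between the critical load and the
  critical store in an order.\<close>
definition gap :: "nat \<Rightarrow> nat list \<Rightarrow> nat" where
  "gap m l = length (takeWhile (\<lambda>z. z \<noteq> m + 1) (tl (dropWhile (\<lambda>z. z \<noteq> m) l)))"

definition Gamma :: "nat \<Rightarrow> nat list \<Rightarrow> nat" where
  "Gamma m l = gap m l + 2"

fun threads :: "nat \<Rightarrow> nat list pmf \<Rightarrow> nat list list pmf" where
  "threads 0 p = return_pmf []"
| "threads (Suc k) p = do { t \<leftarrow> p; ts \<leftarrow> threads k p; return_pmf (t # ts) }"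

definition intervals_disjoint :: "nat list \<Rightarrow> nat list \<Rightarrow> bool" where
  "intervals_disjoint G s =
     (\<forall>i < length G. \<forall>j < length G. i \<noteq> j \<longrightarrow>
        {s ! i .. s ! i + G ! i} \<inter> {s ! j .. s ! j + G ! j} = {})"

definition prob_A :: "memmodel \<Rightarrow> nat \<Rightarrow> nat \<Rightarrow> real" where
  "prob_A M m n = measure_pmf.prob
     (do { xs \<leftarrow> random_prog m;
           ts \<leftarrow> threads n (final_order M m xs);
           s \<leftarrow> replicate_pmf n (geometric_pmf (1/2));
           return_pmf (intervals_disjoint (map (Gamma m) ts) s) })
     {True}"

end

theory Submission
  imports Defs
begin

text \<open>
  (1) For fixed lengths, two intervals at independent Geometric(1/2) shifts
  are disjoint with probability [(2^-G1 + 2^-G2)/3]; hence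
  [Pr[A] = E[2^-gap]/6], the expectation taken over the program and one thread.

  (2) A settling round moves an instruction past a truncated geometric number
  of predecessors, capped by the run of predecessors it may pass. The gap is
  produced by the last two rounds: the critical load passes [k] instructions,
  then the critical store passes [j \<le> k] of them, leaving [gap = k - j].

  (3) SC: nothing moves, [E[2^-gap] = 1]. WO: the runs are [m] and [k]; an
  explicit finite sum gives [E[2^-gap] -> 7/9]. TSO: the store never moves and
  the load passes only the trailing run of stores; its length is a Markov chain
  along the program whose transition is the linear operator [round_op]. The
  mean of [4^-s] satisfies a two-term recursion whose limit is enclosed by two
  unfoldings of the limiting functional equation.
\<close>

lemma integral_cong_pmf:
  fixes f g :: "'a \<Rightarrow> real"
  assumes "\<And>y. y \<in> set_pmf p \<Longrightarrow> f y = g y"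
  shows "(\<integral>y. f y \<partial>p) = (\<integral>y. g y \<partial>p)"
  using assms by (intro integral_cong_AE) (auto simp: AE_measure_pmf_iff)

lemma integrable_pmf_bounded:
  fixes f :: "'a \<Rightarrow> real"
  assumes "\<And>x. \<bar>f x\<bar> \<le> B"
  shows "integrable (measure_pmf p) f"
  by (rule measure_pmf.integrable_const_bound[where B=B]) (auto simp: assms)

lemma abs_integral_pmf_le:
  fixes f :: "'a \<Rightarrow> real" and p :: "'a pmf"
  assumes "\<And>x. \<bar>f x\<bar> \<le> B"
  shows "\<bar>\<integral>x. f x \<partial>p\<bar> \<le> B"
proof -
  have "\<bar>\<integral>x. f x \<partial>p\<bar> \<le> (\<integral>x. \<bar>f x\<bar> \<partial>p)" by (rule integral_abs_bound)
  also have "\<dots> \<le> (\<integral>x. B \<partial>p)"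
    by (rule integral_mono) (auto intro: integrable_pmf_bounded[where B=B] simp: assms)
  finally show ?thesis by simp
qed

lemma integral_bind_pmf_bounded:
  fixes f :: "'b \<Rightarrow> real"
  assumes "\<And>x. \<bar>f x\<bar> \<le> B"
  shows "(\<integral>x. f x \<partial>bind_pmf M N) = (\<integral>x. (\<integral>y. f y \<partial>N x) \<partial>M)"
  using measurable_measure_pmf[of N] assms
  unfolding measure_pmf_bind
  by (intro integral_bind[where K="count_space UNIV" and B=B and B'=1])
     (auto intro: prob_space.finite_measure[OF measure_pmf.prob_space_axioms]
       simp: measure_pmf.emeasure_space_1)

lemma integral_bind_pmf_finite:
  fixes f :: "'b \<Rightarrow> real"
  assumes fin: "finite (set_pmf (bind_pmf M N))"
  shows "(\<integral>x. f x \<partial>bind_pmf M N) = (\<integral>x. (\<integral>y. f y \<partial>N x) \<partial>M)"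
proof -
  define S where "S = set_pmf (bind_pmf M N)"
  define g where "g y = (if y \<in> S then f y else 0)" for y
  have bounded: "\<bar>g y\<bar> \<le> (\<Sum>y\<in>S. \<bar>f y\<bar>)" for y
    unfolding g_def using fin S_def by (auto intro: member_le_sum)
  have "(\<integral>x. f x \<partial>bind_pmf M N) = (\<integral>x. g x \<partial>bind_pmf M N)"
    by (rule integral_cong_pmf) (simp add: g_def S_def)
  also have "\<dots> = (\<integral>x. (\<integral>y. g y \<partial>N x) \<partial>M)"
    by (rule integral_bind_pmf_bounded[OF bounded])
  also have "\<dots> = (\<integral>x. (\<integral>y. f y \<partial>N x) \<partial>M)"
    by (intro integral_cong_pmf) (auto simp: g_def S_def)
  finally show ?thesis .
qed

lemma integral_swap_pmf:
  fixes f :: "'a \<Rightarrow> 'b \<Rightarrow> real" and p :: "'a pmf" and q :: "'b pmf"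
  assumes "\<And>x y. \<bar>f x y\<bar> \<le> B"
  shows "(\<integral>a. (\<integral>b. f a b \<partial>q) \<partial>p) = (\<integral>b. (\<integral>a. f a b \<partial>p) \<partial>q)"
proof -
  have bounded: "\<And>z. \<bar>case_prod f z\<bar> \<le> B" using assms by (auto split: prod.splits)
  have "(\<integral>a. (\<integral>b. f a b \<partial>q) \<partial>p)
      = (\<integral>z. case_prod f z \<partial>(bind_pmf p (\<lambda>a. bind_pmf q (\<lambda>b. return_pmf (a, b)))))"
    by (simp add: integral_bind_pmf_bounded[OF bounded])
  also have "\<dots> = (\<integral>z. case_prod f z \<partial>(bind_pmf q (\<lambda>b. bind_pmf p (\<lambda>a. return_pmf (a, b)))))"
    by (simp only: bind_commute_pmf[of p])
  also have "\<dots> = (\<integral>b. (\<integral>a. f a b \<partial>p) \<partial>q)"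
    by (simp add: integral_bind_pmf_bounded[OF bounded])
  finally show ?thesis .
qed

lemma integral_pair_average:
  fixes h :: "'a \<Rightarrow> real" and p :: "'a pmf"
  assumes "\<And>x. \<bar>h x\<bar> \<le> 1"
  shows "(\<integral>a. (\<integral>b. (h a + h b) / 3 \<partial>p) \<partial>p) = 2 * (\<integral>a. h a \<partial>p) / 3"
proof -
  have int_h: "integrable (measure_pmf p) h" by (rule integrable_pmf_bounded[OF assms])
  have inner: "(\<integral>b. (h a + h b) / 3 \<partial>p) = (h a + (\<integral>b. h b \<partial>p)) / 3" for a
    using int_h by simp
  have "(\<integral>a. (h a + (\<integral>b. h b \<partial>p)) / 3 \<partial>p) = 2 * (\<integral>a. h a \<partial>p) / 3"
    using int_h by simp
  then show ?thesis by (simp only: inner)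
qed

section \<open>Geometric shifts\<close>

abbreviation geom :: "nat pmf" where
  "geom \<equiv> geometric_pmf (1/2)"

lemma integral_geom_unfold:
  fixes f :: "nat \<Rightarrow> real"
  assumes "\<And>x. \<bar>f x\<bar> \<le> B"
  shows "(\<integral>x. f x \<partial>geom) = f 0 / 2 + (\<integral>x. f (Suc x) \<partial>geom) / 2"
proof -
  have "(\<integral>x. f x \<partial>geom)
      = (\<integral>x. f x \<partial>bind_pmf (bernoulli_pmf (1/2))
          (\<lambda>b. if b then return_pmf 0 else map_pmf Suc geom))"
    by (subst geometric_bind_pmf_unfold) auto
  also have "\<dots> = (\<integral>b. (\<integral>y. f y \<partial>(if b then return_pmf 0 else map_pmf Suc geom)) \<partial>bernoulli_pmf (1/2))"
    by (rule integral_bind_pmf_bounded[OF assms])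
  finally show ?thesis by simp
qed

lemma geom_tail: "(\<integral>b. (if N < b then 1 else 0) \<partial>geom) = ((1/2::real) ^ Suc N)"
proof (induction N)
  case 0
  show ?case by (subst integral_geom_unfold[where B=1]) simp_all
next
  case (Suc N)
  then show ?case by (subst integral_geom_unfold[where B=1]) simp_all
qed

lemma geom_half_power: "(\<integral>a. (1/2::real) ^ a \<partial>geom) = 2/3"
proof -
  define E where "E = (\<integral>a. (1/2::real) ^ a \<partial>geom)"
  have "E = 1/2 + (\<integral>a. (1/2) * (1/2::real) ^ a \<partial>geom) / 2"
    unfolding E_def by (subst integral_geom_unfold[where B=1]) (simp_all add: power_le_one)
  also have "(\<integral>a. (1/2) * (1/2::real) ^ a \<partial>geom) = E / 2"
    unfolding E_def by simp
  finally have "E = 1/2 + E/4" by simp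
  then show ?thesis unfolding E_def[symmetric] by simp
qed

lemma geom_ends_before:
  "(\<integral>a. (\<integral>b. (if a + g < b then 1 else 0) \<partial>geom) \<partial>geom) = (1/2::real) ^ g / 3"
proof -
  have "(\<integral>a. (\<integral>b. (if a + g < b then 1 else 0) \<partial>geom) \<partial>geom)
      = (\<integral>a. (1/2) ^ Suc g * (1/2::real) ^ a \<partial>geom)"
    by (simp add: geom_tail power_add)
  also have "\<dots> = (1/2) ^ g / 3" by (simp add: geom_half_power)
  finally show ?thesis .
qed

lemma interval_disjoint_iff:
  "{a..a + g1::nat} \<inter> {b..b + g2} = {} \<longleftrightarrow> a + g1 < b \<or> b + g2 < a"
proof
  assume disj: "{a..a + g1} \<inter> {b..b + g2} = {}"
  show "a + g1 < b \<or> b + g2 < a"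
  proof (rule ccontr)
    assume "\<not> (a + g1 < b \<or> b + g2 < a)"
    then have "max a b \<in> {a..a + g1} \<inter> {b..b + g2}" by auto
    with disj show False by simp
  qed
qed auto

lemma intervals_disjoint_two:
  "intervals_disjoint [g1, g2] [a, b] \<longleftrightarrow> a + g1 < b \<or> b + g2 < a"
  unfolding intervals_disjoint_def
  by (auto simp: numeral_2_eq_2 All_less_Suc interval_disjoint_iff Int_commute)

lemma prob_two_intervals_disjoint:
  "(\<integral>s. indicator {True} (intervals_disjoint [g1, g2] s) \<partial>replicate_pmf 2 geom)
     = ((1/2)^g1 + (1/2)^g2) / (3::real)"
proof -
  define before :: "nat \<Rightarrow> nat \<Rightarrow> nat \<Rightarrow> real"
    where "before g a b = (if a + g < b then 1 else 0)" for g a b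
  have bounded: "\<bar>before g a b\<bar> \<le> 1" for g a b by (simp add: before_def)
  have int_inner: "integrable (measure_pmf geom) (\<lambda>x. before g (u x) (v x))" for g u v
    by (rule integrable_pmf_bounded[OF bounded])
  have int_outer: "integrable (measure_pmf geom) (\<lambda>a. (\<integral>b. before g (u a b) (v a b) \<partial>geom))"
    for g u v
    by (rule integrable_pmf_bounded, rule abs_integral_pmf_le[OF bounded])
  have replicate_two: "replicate_pmf 2 p = bind_pmf p (\<lambda>a. bind_pmf p (\<lambda>b. return_pmf [a, b]))"
    for p :: "nat pmf"
    by (simp add: numeral_2_eq_2 bind_return_pmf bind_assoc_pmf)
  have indicator_split: "indicator {True} (intervals_disjoint [g1, g2] [a, b])
      = before g1 a b + before g2 b a" for a b
    by (auto simp: intervals_disjoint_two before_def)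
  have "(\<integral>s. indicator {True} (intervals_disjoint [g1, g2] s) \<partial>replicate_pmf 2 geom)
      = (\<integral>a. (\<integral>b. before g1 a b + before g2 b a \<partial>geom) \<partial>geom)"
    by (simp add: replicate_two integral_bind_pmf_bounded[where B=1] indicator_split
        del: indicator_simps)
  also have "\<dots> = (\<integral>a. (\<integral>b. before g1 a b \<partial>geom) \<partial>geom) + (\<integral>a. (\<integral>b. before g2 b a \<partial>geom) \<partial>geom)"
    by (simp add: Bochner_Integration.integral_add[OF int_inner int_inner]
        Bochner_Integration.integral_add[OF int_outer int_outer])
  also have "(\<integral>a. (\<integral>b. before g2 b a \<partial>geom) \<partial>geom) = (\<integral>b. (\<integral>a. before g2 b a \<partial>geom) \<partial>geom)"
    by (rule integral_swap_pmf[OF bounded])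
  finally show ?thesis by (simp add: before_def geom_ends_before)
qed

section \<open>Reduction to the expected weight of the gap\<close>

definition gap_weight :: "memmodel \<Rightarrow> nat \<Rightarrow> optype list \<Rightarrow> real" where
  "gap_weight M m xs = (\<integral>t. (1/2) ^ gap m t \<partial>final_order M m xs)"

lemma threads_two: "threads 2 p = bind_pmf p (\<lambda>a. bind_pmf p (\<lambda>b. return_pmf [a, b]))"
  by (simp add: numeral_2_eq_2 bind_return_pmf bind_assoc_pmf)

text \<open>With two threads, [Pr[A] = E[2^-Gamma1 + 2^-Gamma2]/3 = E[2^-gap]/6].\<close>
lemma prob_A_two_threads:
  "prob_A M m 2 = (\<integral>xs. gap_weight M m xs \<partial>random_prog m) / 6"
proof -
  define h where "h t = (1/2::real) ^ Gamma m t" for t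
  have h_bounded: "\<bar>h t\<bar> \<le> 1" for t unfolding h_def by (simp add: power_le_one)
  have "prob_A M m 2
      = (\<integral>xs. (\<integral>a. (\<integral>b. (h a + h b) / 3 \<partial>final_order M m xs) \<partial>final_order M m xs) \<partial>random_prog m)"
    unfolding prob_A_def measure_pmf_single
    by (simp add: pmf_bind threads_two bind_assoc_pmf bind_return_pmf
        prob_two_intervals_disjoint h_def)
  also have "\<dots> = (\<integral>xs. 2 * (\<integral>a. h a \<partial>final_order M m xs) / 3 \<partial>random_prog m)"
    by (simp only: integral_pair_average[OF h_bounded])
  also have "\<dots> = (\<integral>xs. gap_weight M m xs / 6 \<partial>random_prog m)"
    by (simp add: gap_weight_def h_def Gamma_def power_add)
  finally show ?thesis by simp
qed

section \<open>One round of settling moves a truncated geometric distance\<close>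

text \<open>[trunc_geom n]: the number of successes before the first failure of fair
  coin flips, capped at [n].\<close>
fun trunc_geom :: "nat \<Rightarrow> nat pmf" where
  "trunc_geom 0 = return_pmf 0"
| "trunc_geom (Suc n) =
     bind_pmf (bernoulli_pmf (1/2)) (\<lambda>b. if b then map_pmf Suc (trunc_geom n) else return_pmf 0)"

lemma set_trunc_geom: "set_pmf (trunc_geom n) \<subseteq> {..n}"
  by (induction n) (auto split: if_splits)

lemma finite_trunc_geom: "finite (set_pmf (trunc_geom n))"
  using set_trunc_geom finite_subset by blast

lemma move_trunc_geom:
  "move can x ys = map_pmf (\<lambda>k. rev (drop k ys) @ [x] @ rev (take k ys))
                     (trunc_geom (length (takeWhile (\<lambda>y. can y x) ys)))"
proof (induction ys)
  case (Cons y ys)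
  let ?place = "\<lambda>ys k. rev (drop k ys) @ [x] @ rev (take k ys)"
  show ?case
  proof (cases "can y x")
    case True
    have "move can x (y # ys) = bind_pmf (bernoulli_pmf (1/2)) (\<lambda>b.
            if b then map_pmf (\<lambda>l. l @ [y]) (move can x ys) else return_pmf (rev (y # ys) @ [x]))"
      using True by simp
    also have "\<dots> = bind_pmf (bernoulli_pmf (1/2)) (\<lambda>b. map_pmf (?place (y # ys))
        (if b then map_pmf Suc (trunc_geom (length (takeWhile (\<lambda>y. can y x) ys))) else return_pmf 0))"
      by (intro bind_pmf_cong refl) (auto simp: Cons pmf.map_comp o_def)
    also have "\<dots> = map_pmf (?place (y # ys)) (trunc_geom (length (takeWhile (\<lambda>y. can y x) (y # ys))))"
      using True by (simp add: map_bind_pmf)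
    finally show ?thesis .
  qed simp
qed simp

fun trunc_mean :: "nat \<Rightarrow> (nat \<Rightarrow> real) \<Rightarrow> real" where
  "trunc_mean 0 f = f 0"
| "trunc_mean (Suc n) f = trunc_mean n (\<lambda>k. f (Suc k)) / 2 + f 0 / 2"

lemma integral_trunc_geom: "(\<integral>k. f k \<partial>trunc_geom n) = trunc_mean n f"
proof (induction n arbitrary: f)
  case (Suc n)
  have "(\<integral>k. f k \<partial>trunc_geom (Suc n))
      = (\<integral>b. (\<integral>k. f k \<partial>(if b then map_pmf Suc (trunc_geom n) else return_pmf 0)) \<partial>bernoulli_pmf (1/2))"
    unfolding trunc_geom.simps
    by (rule integral_bind_pmf_finite) (metis finite_trunc_geom trunc_geom.simps(2))
  then show ?case by (simp add: Suc)
qed simp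

lemma trunc_mean_cong: "(\<And>k. k \<le> n \<Longrightarrow> f k = g k) \<Longrightarrow> trunc_mean n f = trunc_mean n g"
proof (induction n arbitrary: f g)
  case (Suc n)
  have "trunc_mean n (\<lambda>k. f (Suc k)) = trunc_mean n (\<lambda>k. g (Suc k))"
    by (rule Suc.IH) (simp add: Suc.prems)
  then show ?case using Suc.prems[of 0] by simp
qed simp

lemma trunc_mean_linear:
  "trunc_mean n (\<lambda>k. a * f k + b * g k + c) = a * trunc_mean n f + b * trunc_mean n g + c"
proof (induction n arbitrary: f g)
  case (Suc n)
  then show ?case by (simp add: field_simps)
qed simp

lemma trunc_mean_sum: "trunc_mean n f = (\<Sum>k<n. (1/2) ^ Suc k * f k) + (1/2) ^ n * f n"
proof (induction n arbitrary: f)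
  case (Suc n)
  have "(\<Sum>k<Suc n. (1/2::real) ^ Suc k * f k) = f 0 / 2 + (\<Sum>k<n. (1/2) ^ Suc k * f (Suc k)) / 2"
    by (subst sum.lessThan_Suc_shift) (simp add: sum_divide_distrib)
  then show ?case by (simp add: Suc)
qed simp

lemma trunc_mean_power:
  fixes a :: real
  assumes "a \<noteq> 2"
  shows "trunc_mean s (\<lambda>k. a ^ k) = 1/(2 - a) + (a/2) ^ s * (1 - a)/(2 - a)"
proof (induction s)
  case 0
  then show ?case using assms by (simp add: field_simps)
next
  case (Suc s)
  have "trunc_mean (Suc s) (\<lambda>k. a ^ k) = a * trunc_mean s (\<lambda>k. a ^ k) / 2 + 1/2"
    using trunc_mean_linear[of s a "\<lambda>k. a ^ k" 0 "\<lambda>k. a ^ k" 0] by simp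
  also have "\<dots> = 1/(2 - a) + (a/2) ^ Suc s * (1 - a)/(2 - a)"
  proof -
    define e where "e = 1/(2 - a)"
    have e_inv: "e * (2 - a) = 1" using assms by (simp add: e_def)
    have "a * (e + t * (1 - a) * e) / 2 + 1/2 - (e + (a/2 * t) * (1 - a) * e) = (1 - e * (2 - a)) / 2"
      for t :: real
      by (simp add: field_simps)
    then have "a * (e + t * (1 - a) * e) / 2 + 1/2 = e + (a/2 * t) * (1 - a) * e" for t :: real
      using e_inv by simp
    then show ?thesis unfolding Suc by (simp add: e_def)
  qed
  finally show ?case .
qed

lemma set_move:
  assumes "l \<in> set_pmf (move can x ys)"
  shows "set l = insert x (set ys) \<and> length l = Suc (length ys)"
proof -
  obtain k where "l = rev (drop k ys) @ [x] @ rev (take k ys)"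
    using assms by (auto simp: move_trunc_geom)
  moreover have "set ys = set (take k ys) \<union> set (drop k ys)"
    by (metis append_take_drop_id set_append)
  ultimately show ?thesis by auto
qed

lemma set_settle:
  assumes "l \<in> set_pmf (settle can r)"
  shows "set l = {..<r} \<and> length l = r"
  using assms
proof (induction r arbitrary: l)
  case (Suc r)
  then obtain pre where pre: "pre \<in> set_pmf (settle can r)"
    and l: "l \<in> set_pmf (move can r (rev pre))"
    by auto
  from Suc.IH[OF pre] set_move[OF l] show ?case by (auto simp: lessThan_Suc)
qed simp

lemma finite_settle: "finite (set_pmf (settle can r))"
proof (rule finite_subset)
  show "set_pmf (settle can r) \<subseteq> {l. set l \<subseteq> {..<r} \<and> length l = r}"
    using set_settle by fastforce
  show "finite {l. set l \<subseteq> {..<r} \<and> length l = r}"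
    by (rule finite_lists_length_eq) simp
qed

lemma integral_settle_Suc:
  fixes G :: "nat list \<Rightarrow> real"
  shows "(\<integral>l. G l \<partial>settle can (Suc n)) = (\<integral>pre. (\<integral>l. G l \<partial>move can n (rev pre)) \<partial>settle can n)"
  unfolding settle.simps(2)
  by (rule integral_bind_pmf_finite) (metis finite_settle settle.simps(2))

lemma settle_cong:
  assumes "\<And>y x. y < x \<Longrightarrow> x < r \<Longrightarrow> can1 y x = can2 y x"
  shows "settle can1 r = settle can2 r"
  using assms
proof (induction r)
  case (Suc r)
  have IH: "settle can1 r = settle can2 r" by (rule Suc.IH) (use Suc.prems in auto)
  show ?case
  proof (simp only: settle.simps IH, rule bind_pmf_cong[OF refl])
    fix pre assume pre: "pre \<in> set_pmf (settle can2 r)"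
    have "takeWhile (\<lambda>y. can1 y r) (rev pre) = takeWhile (\<lambda>y. can2 y r) (rev pre)"
      by (rule takeWhile_cong[OF refl]) (use set_settle[OF pre] Suc.prems in auto)
    then show "move can1 r (rev pre) = move can2 r (rev pre)" by (simp add: move_trunc_geom)
  qed
qed simp

section \<open>The gap after the two critical rounds\<close>

lemma gap_split:
  assumes "m \<notin> set A" "Suc m \<notin> set B"
  shows "gap m (A @ m # B @ Suc m # C) = length B"
  using assms unfolding gap_def by (induction A) (auto simp: takeWhile_append)

lemma length_takeWhile_before:
  assumes "\<not> Q x"
  shows "length (takeWhile Q (A @ x # B)) \<le> length A"
  using assms by (induction A) auto

lemma length_takeWhile_insert:
  assumes "k \<le> length (takeWhile Q P)" "\<not> Q z"
  shows "length (takeWhile Q (take k P @ z # R)) = k"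
proof -
  have "take k P = take k (takeWhile Q P @ dropWhile Q P)" by simp
  also have "\<dots> = take k (takeWhile Q P)" using assms(1) by (simp only: take_append) simp
  finally have "take k P = take k (takeWhile Q P)" .
  then have "\<forall>x\<in>set (take k P). Q x"
    by (metis in_set_takeD set_takeWhileD)
  then have "takeWhile Q (take k P @ z # R) = take k P @ takeWhile Q (z # R)"
    by (intro takeWhile_append2) auto
  moreover have "k \<le> length P" using assms(1) length_takeWhile_le order_trans by blast
  ultimately show ?thesis using assms(2) by simp
qed

lemma gap_after_moves:
  assumes P: "set P = {..<m}" and k: "k \<le> length P" and j: "j \<le> k"
  defines "Q \<equiv> take k P @ m # drop k P"
  shows "gap m (rev (drop j Q) @ [Suc m] @ rev (take j Q)) = k - j"
proof -
  have "drop j Q = drop j (take k P) @ m # drop k P"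
    using j k by (simp add: Q_def)
  then have order: "rev (drop j Q) @ [Suc m] @ rev (take j Q)
      = rev (drop k P) @ m # rev (drop j (take k P)) @ Suc m # rev (take j Q)"
    by simp
  have "m \<notin> set (rev (drop k P))" using P set_drop_subset[of k P] by auto
  moreover have "Suc m \<notin> set (rev (drop j (take k P)))"
    using P set_drop_subset[of j "take k P"] set_take_subset[of k P] by auto
  ultimately have "gap m (rev (drop k P) @ m # rev (drop j (take k P)) @ Suc m # rev (take j Q))
      = length (rev (drop j (take k P)))"
    by (rule gap_split)
  then show ?thesis using k by (simp only: order) simp
qed

text \<open>[last_rounds_mean can m f P]: the mean of [f(gap)] given the settled
  prefix [P] (nearest instruction first), as a nested truncated-geometric mean:
  the load passes [k] instructions, then the store passes [j] of them.\<close>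
definition last_rounds_mean :: "(nat \<Rightarrow> nat \<Rightarrow> bool) \<Rightarrow> nat \<Rightarrow> (nat \<Rightarrow> real) \<Rightarrow> nat list \<Rightarrow> real" where
  "last_rounds_mean can m f P =
     trunc_mean (length (takeWhile (\<lambda>y. can y m) P))
       (\<lambda>k. trunc_mean (length (takeWhile (\<lambda>y. can y (Suc m)) (take k P @ m # drop k P)))
              (\<lambda>j. f (k - j)))"

lemma last_rounds:
  assumes P: "set P = {..<m}" and no_pass: "\<not> can m (Suc m)"
  shows "(\<integral>l. (\<integral>t. f (gap m t) \<partial>move can (Suc m) (rev l)) \<partial>move can m P) = last_rounds_mean can m f P"
proof -
  define c1 where "c1 = length (takeWhile (\<lambda>y. can y m) P)"
  define c2 where "c2 k = length (takeWhile (\<lambda>y. can y (Suc m)) (take k P @ m # drop k P))" for k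
  have c1: "c1 \<le> length P" unfolding c1_def by (rule length_takeWhile_le)
  have c2: "c2 k \<le> k" if "k \<le> length P" for k
    using length_takeWhile_before[of "\<lambda>y. can y (Suc m)" m "take k P" "drop k P"] no_pass that
    by (simp add: c2_def)
  have "(\<integral>l. (\<integral>t. f (gap m t) \<partial>move can (Suc m) (rev l)) \<partial>move can m P)
     = (\<integral>k. (\<integral>j. f (gap m (rev (drop j (take k P @ m # drop k P)) @ [Suc m]
                    @ rev (take j (take k P @ m # drop k P)))) \<partial>trunc_geom (c2 k)) \<partial>trunc_geom c1)"
    by (simp add: move_trunc_geom c1_def c2_def)
  also have "\<dots> = (\<integral>k. (\<integral>j. f (k - j) \<partial>trunc_geom (c2 k)) \<partial>trunc_geom c1)"
  proof (intro integral_cong_pmf)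
    fix k j assume k: "k \<in> set_pmf (trunc_geom c1)" and j: "j \<in> set_pmf (trunc_geom (c2 k))"
    have "k \<le> length P" using k set_trunc_geom c1 by fastforce
    moreover from this have "j \<le> k" using j set_trunc_geom c2 by fastforce
    ultimately show "f (gap m (rev (drop j (take k P @ m # drop k P)) @ [Suc m]
                     @ rev (take j (take k P @ m # drop k P)))) = f (k - j)"
      using gap_after_moves[OF P] by simp
  qed
  finally show ?thesis by (simp add: integral_trunc_geom last_rounds_mean_def c1_def c2_def)
qed

lemma integral_gap_settle:
  assumes no_pass: "\<not> can m (Suc m)"
  shows "(\<integral>t. f (gap m t) \<partial>settle can (m + 2))
       = (\<integral>pre. last_rounds_mean can m f (rev pre) \<partial>settle can m)"
proof -
  have "(\<integral>t. f (gap m t) \<partial>settle can (m + 2))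
      = (\<integral>pre. (\<integral>l. (\<integral>t. f (gap m t) \<partial>move can (Suc m) (rev l)) \<partial>move can m (rev pre)) \<partial>settle can m)"
    by (simp only: add_2_eq_Suc' integral_settle_Suc)
  also have "\<dots> = (\<integral>pre. last_rounds_mean can m f (rev pre) \<partial>settle can m)"
    by (intro integral_cong_pmf last_rounds no_pass) (simp add: set_settle)
  finally show ?thesis .
qed

lemma gap_weight_last_rounds:
  "gap_weight M m xs
     = (\<integral>pre. last_rounds_mean (can_swap M m xs) m (\<lambda>d. (1/2) ^ d) (rev pre) \<partial>settle (can_swap M m xs) m)"
  unfolding gap_weight_def final_order_def
  by (rule integral_gap_settle) (simp add: can_swap_def)

section \<open>Sequential Consistency and Weak Ordering\<close>

text \<open>The swap relations of SC and WO are constant on the relevant instructions.\<close>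
lemma takeWhile_const [simp]:
  "takeWhile (\<lambda>y. False) xs = []" "takeWhile (\<lambda>y. True) xs = xs"
  by (cases xs) (simp_all add: takeWhile_eq_all_conv)

text \<open>Under SC nothing moves, so the gap is always 0.\<close>
lemma gap_weight_SC: "gap_weight SC m xs = 1"
  by (simp add: gap_weight_last_rounds last_rounds_mean_def can_swap_def)

text \<open>Under WO the critical load may pass all [m] instructions, and the store
  may pass everything the load passed; so [E[2^-gap]] no longer depends on [xs].\<close>
definition wo_weight :: "nat \<Rightarrow> real" where
  "wo_weight m = trunc_mean m (\<lambda>k. trunc_mean k (\<lambda>j. (1/2) ^ (k - j)))"

lemma gap_weight_WO: "gap_weight WO m xs = wo_weight m"
proof -
  have "gap_weight WO m xs = (\<integral>pre. wo_weight m \<partial>settle (can_swap WO m xs) m)"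
    unfolding gap_weight_last_rounds
  proof (rule integral_cong_pmf)
    fix pre assume pre: "pre \<in> set_pmf (settle (can_swap WO m xs) m)"
    define P where "P = rev pre"
    have P: "set P = {..<m}" "length P = m" using set_settle[OF pre] by (auto simp: P_def)
    have all_before: "takeWhile (\<lambda>y. y \<noteq> m) P = P" using P by auto
    have store_run: "length (takeWhile (\<lambda>y. y \<noteq> m) (take k P @ m # drop k P)) = k"
      if "k \<le> m" for k
      using length_takeWhile_insert[of k "\<lambda>y. y \<noteq> m" P m "drop k P"] that P all_before
      by simp
    show "last_rounds_mean (can_swap WO m xs) m (\<lambda>d. (1/2) ^ d) (rev pre) = wo_weight m"
      unfolding P_def[symmetric] last_rounds_mean_def wo_weight_def
      by (simp add: can_swap_def P) (rule trunc_mean_cong, simp add: store_run)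
  qed
  then show ?thesis by simp
qed

lemma trunc_mean_gap_weight: "trunc_mean k (\<lambda>j. 1 / (2::real) ^ (k - j)) = (real k + 2) / 2 ^ Suc k"
proof (induction k)
  case (Suc k)
  have "trunc_mean (Suc k) (\<lambda>j. 1 / (2::real) ^ (Suc k - j))
      = trunc_mean k (\<lambda>j. 1 / (2::real) ^ (k - j)) / 2 + 1 / 2 ^ Suc k / 2"
    by simp
  then show ?case by (simp add: Suc field_simps)
qed simp

lemma sum_wo_weight: "(\<Sum>k<m. (real k + 2) * (1/4) ^ Suc k) = 7/9 - (3 * real m + 7) * (1/4) ^ m / 9"
proof (induction m)
  case (Suc m)
  have step: "7/9 - (3 * x + 7) * q / 9 + (x + 2) * (q * (1/4)) = 7/9 - (3 * (x + 1) + 7) * (q * (1/4)) / 9"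
    for x q :: real
    by (simp add: field_simps)
  have "(\<Sum>k<Suc m. (real k + 2) * (1/4) ^ Suc k)
      = 7/9 - (3 * real m + 7) * (1/4) ^ m / 9 + (real m + 2) * (1/4) ^ Suc m"
    by (simp only: sum.lessThan_Suc Suc.IH)
  then show ?case using step[of "real m" "(1/4) ^ m"] by (simp add: power_Suc2)
qed simp

lemma wo_weight_closed: "wo_weight m = 7/9 + (1/6) * (real m * (1/4) ^ m) + (2/9) * (1/4) ^ m"
proof -
  have "wo_weight m = trunc_mean m (\<lambda>k. (real k + 2) * (1/2) ^ Suc k)"
    unfolding wo_weight_def by (rule trunc_mean_cong) (simp add: trunc_mean_gap_weight power_one_over)
  also have "\<dots> = (\<Sum>k<m. (real k + 2) * (1/4) ^ Suc k) + (real m + 2) / 2 * (1/4) ^ m"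
    by (simp add: trunc_mean_sum power_mult_distrib[symmetric] mult_ac)
  finally show ?thesis by (simp only: sum_wo_weight) (simp add: field_simps)
qed

lemma prob_A_SC: "prob_A SC m 2 = 1/6"
  by (simp add: prob_A_two_threads gap_weight_SC)

lemma prob_A_WO_limit: "(\<lambda>m. prob_A WO m 2) \<longlonglongrightarrow> 7/54"
proof -
  have "(\<lambda>m. real m * (1/4::real) ^ m) \<longlonglongrightarrow> 0" by (rule powser_times_n_limit_0) simp
  moreover have "(\<lambda>m. (1/4::real) ^ m) \<longlonglongrightarrow> 0" by (rule LIMSEQ_power_zero) simp
  ultimately have "(\<lambda>m. wo_weight m / 6) \<longlonglongrightarrow> (7/9 + (1/6) * 0 + (2/9) * 0) / 6"
    unfolding wo_weight_closed by (intro tendsto_intros) auto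
  then show ?thesis by (simp add: prob_A_two_threads gap_weight_WO)
qed

section \<open>Total Store Order: the run of trailing stores\<close>

text \<open>Under TSO only loads move, and only past stores. The critical store
  cannot move at all, and the critical load passes the run of stores at the end
  of the settled prefix. We therefore track the length of that run while the
  first [m] instructions settle.\<close>

definition prefix_type :: "optype list \<Rightarrow> nat \<Rightarrow> optype" where
  "prefix_type xs i = (if i < length xs then xs ! i else LD)"

definition tso_can :: "optype list \<Rightarrow> nat \<Rightarrow> nat \<Rightarrow> bool" where
  "tso_can xs y x = (prefix_type xs y = ST \<and> prefix_type xs x = LD)"

definition trailing_stores :: "optype list \<Rightarrow> nat list \<Rightarrow> nat" where
  "trailing_stores xs pre = length (takeWhile (\<lambda>y. prefix_type xs y = ST) (rev pre))"

definition trailing_mean :: "optype list \<Rightarrow> (nat \<Rightarrow> real) \<Rightarrow> real" where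
  "trailing_mean xs g = (\<integral>pre. g (trailing_stores xs pre) \<partial>settle (tso_can xs) (length xs))"

text \<open>One more round: a store stays put and extends the run by one; a load
  passes [k] of the [s] trailing stores ([k] truncated geometric), after which
  exactly those [k] stores trail.\<close>
lemma trailing_stores_round:
  assumes pre: "pre \<in> set_pmf (settle (tso_can ys) (length ys))"
  defines "s \<equiv> trailing_stores ys pre"
  shows "(\<integral>l. g (trailing_stores (ys @ [x]) l) \<partial>move (tso_can (ys @ [x])) (length ys) (rev pre))
       = (if x = ST then g (Suc s) else trunc_mean s g)"
proof -
  define n where "n = length ys"
  define xs where "xs = ys @ [x]"
  define P where "P = rev pre"
  have P: "set P = {..<n}" using set_settle[OF pre] by (simp add: P_def n_def)
  have type_new: "prefix_type xs n = x" by (simp add: prefix_type_def n_def xs_def)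
  have "takeWhile (\<lambda>y. prefix_type xs y = ST) P = takeWhile (\<lambda>y. prefix_type ys y = ST) P"
    by (rule takeWhile_cong[OF refl]) (use P in \<open>auto simp: prefix_type_def nth_append n_def xs_def\<close>)
  then have s_eq: "s = length (takeWhile (\<lambda>y. prefix_type xs y = ST) P)"
    by (simp add: s_def trailing_stores_def P_def)
  have new_run: "trailing_stores xs (rev (drop k P) @ [n] @ rev (take k P))
      = length (takeWhile (\<lambda>y. prefix_type xs y = ST) (take k P @ n # drop k P))" for k
    by (simp add: trailing_stores_def)
  show ?thesis
  proof (cases x)
    case ST
    have "takeWhile (\<lambda>y. tso_can xs y n) P = []" by (cases P) (simp_all add: tso_can_def type_new ST)
    then have "move (tso_can xs) n P = return_pmf (rev P @ [n])" by (simp add: move_trunc_geom)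
    moreover have "trailing_stores xs (rev P @ [n]) = Suc s"
      using new_run[of 0] s_eq type_new ST by simp
    ultimately show ?thesis using ST by (simp add: P_def n_def xs_def)
  next
    case LD
    have load_run: "length (takeWhile (\<lambda>y. tso_can xs y n) P) = s"
      by (simp add: tso_can_def type_new LD s_eq)
    have "(\<integral>l. g (trailing_stores xs l) \<partial>move (tso_can xs) n P)
        = (\<integral>k. g (trailing_stores xs (rev (drop k P) @ [n] @ rev (take k P))) \<partial>trunc_geom s)"
      by (simp add: move_trunc_geom load_run)
    also have "\<dots> = (\<integral>k. g k \<partial>trunc_geom s)"
    proof (rule integral_cong_pmf)
      fix k assume "k \<in> set_pmf (trunc_geom s)"
      then have "k \<le> s" using set_trunc_geom by fastforce
      then show "g (trailing_stores xs (rev (drop k P) @ [n] @ rev (take k P))) = g k"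
        unfolding new_run s_eq by (subst length_takeWhile_insert) (simp_all add: type_new LD)
    qed
    finally show ?thesis using LD by (simp add: integral_trunc_geom P_def n_def xs_def)
  qed
qed

lemma trailing_mean_snoc:
  "trailing_mean (ys @ [x]) g = trailing_mean ys (if x = ST then (\<lambda>s. g (Suc s)) else (\<lambda>s. trunc_mean s g))"
proof -
  have same_prefix: "settle (tso_can (ys @ [x])) (length ys) = settle (tso_can ys) (length ys)"
    by (rule settle_cong) (simp add: tso_can_def prefix_type_def nth_append)
  have "trailing_mean (ys @ [x]) g
      = (\<integral>pre. (\<integral>l. g (trailing_stores (ys @ [x]) l) \<partial>move (tso_can (ys @ [x])) (length ys) (rev pre))
           \<partial>settle (tso_can ys) (length ys))"
    by (simp only: trailing_mean_def length_append_singleton integral_settle_Suc same_prefix)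
  also have "\<dots> = trailing_mean ys (if x = ST then (\<lambda>s. g (Suc s)) else (\<lambda>s. trunc_mean s g))"
    unfolding trailing_mean_def by (rule integral_cong_pmf) (simp add: trailing_stores_round)
  finally show ?thesis .
qed

lemma trailing_mean_Nil: "trailing_mean [] g = g 0"
  by (simp add: trailing_mean_def trailing_stores_def)

lemma trailing_mean_average:
  "trailing_mean ys (\<lambda>s. (f1 s + f2 s) / 2) = (trailing_mean ys f1 + trailing_mean ys f2) / 2"
proof -
  have "integrable (measure_pmf (settle (tso_can ys) (length ys))) f" for f :: "nat list \<Rightarrow> real"
    by (rule integrable_measure_pmf_finite) (rule finite_settle)
  then show ?thesis by (simp add: trailing_mean_def)
qed

definition coin :: "optype pmf" where
  "coin = map_pmf (\<lambda>b. if b then ST else LD) (bernoulli_pmf (1/2))"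

lemma finite_programs: "finite (set_pmf (replicate_pmf m coin))"
proof (rule finite_subset)
  show "set_pmf (replicate_pmf m coin) \<subseteq> {xs. set xs \<subseteq> {LD, ST} \<and> length xs = m}"
    by (auto simp: set_replicate_pmf intro: optype.exhaust)
  show "finite {xs. set xs \<subseteq> {LD, ST} \<and> length xs = m}"
    by (rule finite_lists_length_eq) simp
qed

lemma replicate_pmf_Suc_snoc:
  "replicate_pmf (Suc m) p = bind_pmf (replicate_pmf m p) (\<lambda>ys. map_pmf (\<lambda>x. ys @ [x]) p)"
  by (subst Suc_eq_plus1, subst replicate_pmf_distrib)
     (simp add: replicate_pmf_1 map_pmf_def bind_assoc_pmf bind_return_pmf)

text \<open>Appending a random instruction transforms the test function [g] of the
  run length by [round_op]: a store shifts it, a load averages it.\<close>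
definition round_op :: "(nat \<Rightarrow> real) \<Rightarrow> nat \<Rightarrow> real" where
  "round_op g s = (g (Suc s) + trunc_mean s g) / 2"

definition prog_trailing_mean :: "nat \<Rightarrow> (nat \<Rightarrow> real) \<Rightarrow> real" where
  "prog_trailing_mean m g = (\<integral>xs. trailing_mean xs g \<partial>replicate_pmf m coin)"

lemma prog_trailing_mean_Suc: "prog_trailing_mean (Suc m) g = prog_trailing_mean m (round_op g)"
proof -
  have "prog_trailing_mean (Suc m) g
      = (\<integral>ys. (\<integral>xs. trailing_mean xs g \<partial>map_pmf (\<lambda>x. ys @ [x]) coin) \<partial>replicate_pmf m coin)"
    unfolding prog_trailing_mean_def replicate_pmf_Suc_snoc
    by (rule integral_bind_pmf_finite) (metis finite_programs replicate_pmf_Suc_snoc)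
  also have "\<dots> = (\<integral>ys. trailing_mean ys (round_op g) \<partial>replicate_pmf m coin)"
  proof (rule Bochner_Integration.integral_cong[OF refl])
    fix ys
    have "(\<integral>xs. trailing_mean xs g \<partial>map_pmf (\<lambda>x. ys @ [x]) coin)
        = (trailing_mean ys (\<lambda>s. g (Suc s)) + trailing_mean ys (\<lambda>s. trunc_mean s g)) / 2"
      by (simp add: coin_def trailing_mean_snoc)
    also have "\<dots> = trailing_mean ys (round_op g)"
      unfolding round_op_def by (rule trailing_mean_average[symmetric])
    finally show "(\<integral>xs. trailing_mean xs g \<partial>map_pmf (\<lambda>x. ys @ [x]) coin) = trailing_mean ys (round_op g)" .
  qed
  finally show ?thesis by (simp only: prog_trailing_mean_def)
qed

lemma prog_trailing_mean_iterate: "prog_trailing_mean m g = (round_op ^^ m) g 0"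
proof (induction m arbitrary: g)
  case 0
  then show ?case by (simp add: prog_trailing_mean_def trailing_mean_Nil)
next
  case (Suc m)
  then show ?case by (simp only: prog_trailing_mean_Suc funpow_Suc_right comp_apply)
qed

lemma round_op_linear:
  "round_op (\<lambda>s. \<alpha> * f s + \<beta> * g s + \<gamma>) = (\<lambda>s. \<alpha> * round_op f s + \<beta> * round_op g s + \<gamma>)"
  unfolding round_op_def trunc_mean_linear by (rule ext) (simp add: field_simps)

lemma round_op_iterate_linear:
  "(round_op ^^ m) (\<lambda>s. \<alpha> * f s + \<beta> * g s + \<gamma>) s
     = \<alpha> * (round_op ^^ m) f s + \<beta> * (round_op ^^ m) g s + \<gamma>"
proof (induction m arbitrary: f g s)
  case (Suc m)
  then show ?case by (simp only: funpow_Suc_right comp_apply round_op_linear)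
qed simp

lemma round_op_iterate_affine:
  "(round_op ^^ m) (\<lambda>s. \<alpha> * f s + \<gamma>) s = \<alpha> * (round_op ^^ m) f s + \<gamma>"
  using round_op_iterate_linear[of m \<alpha> f 0 f \<gamma> s] by simp

section \<open>The TSO recursion and its limit\<close>

text \<open>Applying [round_op] to [a^s] produces a mixture of
  [a^s], [(a/2)^s] and a constant, which yields a recursion in [m].\<close>
definition tso_weight :: "nat \<Rightarrow> real \<Rightarrow> real" where
  "tso_weight m a = (round_op ^^ m) (\<lambda>s. a ^ s) 0"

definition coef_b :: "real \<Rightarrow> real" where "coef_b a = (1 - a) / (2 * (2 - a))"
definition coef_c :: "real \<Rightarrow> real" where "coef_c a = 1 / (2 * (2 - a))"

lemma round_op_power:
  assumes "a \<noteq> 2"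
  shows "round_op (\<lambda>s. a ^ s) = (\<lambda>s. (a/2) * a ^ s + coef_b a * (a/2) ^ s + coef_c a)"
proof (rule ext)
  fix s
  define e where "e = 1/(2 - a)"
  have coefs: "coef_b a = (1 - a) * e / 2" "coef_c a = e / 2"
    by (simp_all add: coef_b_def coef_c_def e_def)
  have "round_op (\<lambda>s. a ^ s) s = (a * a ^ s + (e + (a/2) ^ s * (1 - a) * e)) / 2"
    by (simp add: round_op_def trunc_mean_power[OF assms] e_def)
  also have "\<dots> = (a/2) * a ^ s + ((1 - a) * e / 2) * (a/2) ^ s + e / 2"
    by (simp add: field_simps)
  finally show "round_op (\<lambda>s. a ^ s) s = (a/2) * a ^ s + coef_b a * (a/2) ^ s + coef_c a"
    by (simp only: coefs)
qed

lemma tso_weight_Suc: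
  assumes "a \<noteq> 2"
  shows "tso_weight (Suc m) a = (a/2) * tso_weight m a + coef_b a * tso_weight m (a/2) + coef_c a"
  by (simp only: tso_weight_def funpow_Suc_right o_apply round_op_power[OF assms]
      round_op_iterate_linear)

lemma coef_bounds:
  assumes "0 \<le> a" "a \<le> 1"
  shows "0 \<le> coef_b a" "coef_b a + coef_c a = 1/2" "a/2 + coef_b a \<le> 1/2"
proof -
  have d: "2 - a \<ge> 1" using assms by simp
  show "0 \<le> coef_b a" using assms d by (simp add: coef_b_def)
  show "coef_b a + coef_c a = 1/2" using d by (simp add: coef_b_def coef_c_def field_simps)
  have "coef_b a \<le> (1 - a)/2" unfolding coef_b_def
    by (rule divide_left_mono) (use assms d in auto)
  then show "a/2 + coef_b a \<le> 1/2" by simp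
qed

lemma tso_weight_bounds: "0 \<le> a \<Longrightarrow> a \<le> 1 \<Longrightarrow> 0 \<le> tso_weight m a \<and> tso_weight m a \<le> 1"
proof (induction m arbitrary: a)
  case 0
  then show ?case by (simp add: tso_weight_def)
next
  case (Suc m)
  have IH: "0 \<le> tso_weight m a" "tso_weight m a \<le> 1"
           "0 \<le> tso_weight m (a/2)" "tso_weight m (a/2) \<le> 1"
    using Suc.IH[of a] Suc.IH[of "a/2"] Suc.prems by auto
  note c = coef_bounds[OF Suc.prems]
  have "(a/2) * tso_weight m a \<le> a/2" "coef_b a * tso_weight m (a/2) \<le> coef_b a"
    using IH c Suc.prems by (simp_all add: mult_left_le)
  moreover have "0 \<le> (a/2) * tso_weight m a" "0 \<le> coef_b a * tso_weight m (a/2)"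
    using IH c Suc.prems by simp_all
  ultimately show ?case using c Suc.prems by (simp add: tso_weight_Suc)
qed

text \<open>Successive differences contract by a factor [1/2], so [tso_weight m a]
  converges geometrically fast.\<close>
definition tso_step :: "nat \<Rightarrow> real \<Rightarrow> real" where
  "tso_step m a = tso_weight (Suc m) a - tso_weight m a"

lemma tso_step_bound: "0 \<le> a \<Longrightarrow> a \<le> 1 \<Longrightarrow> \<bar>tso_step m a\<bar> \<le> (1/2) ^ m"
proof (induction m arbitrary: a)
  case 0
  have "0 \<le> tso_weight 1 a \<and> tso_weight 1 a \<le> 1" by (rule tso_weight_bounds) (use 0 in auto)
  moreover have "tso_weight 0 a = 1" by (simp add: tso_weight_def)
  ultimately show ?case by (simp add: tso_step_def abs_le_iff)
next
  case (Suc m)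
  note c = coef_bounds[OF Suc.prems]
  have "tso_step (Suc m) a = (a/2) * tso_step m a + coef_b a * tso_step m (a/2)"
    using Suc.prems by (simp add: tso_step_def tso_weight_Suc algebra_simps)
  then have "\<bar>tso_step (Suc m) a\<bar> \<le> \<bar>(a/2) * tso_step m a\<bar> + \<bar>coef_b a * tso_step m (a/2)\<bar>"
    by (simp only: abs_triangle_ineq)
  also have "\<dots> = (a/2) * \<bar>tso_step m a\<bar> + coef_b a * \<bar>tso_step m (a/2)\<bar>"
    using Suc.prems c by (simp add: abs_mult)
  also have "\<dots> \<le> (a/2) * (1/2) ^ m + coef_b a * (1/2) ^ m"
    using Suc.IH[of a] Suc.IH[of "a/2"] Suc.prems c by (intro add_mono mult_left_mono) auto
  also have "\<dots> = (a/2 + coef_b a) * (1/2) ^ m" by (simp add: algebra_simps)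
  also have "\<dots> \<le> (1/2) * (1/2) ^ m" by (rule mult_right_mono) (use c in auto)
  finally show ?case by simp
qed

definition tso_limit :: "real \<Rightarrow> real" where
  "tso_limit a = 1 + (\<Sum>i. tso_step i a)"

lemma tso_weight_limit: "0 \<le> a \<Longrightarrow> a \<le> 1 \<Longrightarrow> (\<lambda>m. tso_weight m a) \<longlonglongrightarrow> tso_limit a"
proof -
  assume a: "0 \<le> a" "a \<le> 1"
  have "summable (\<lambda>i. tso_step i a)"
    by (rule summable_comparison_test[where g="\<lambda>n. (1/2) ^ n"])
       (auto simp: tso_step_bound[OF a] summable_geometric)
  then have "(\<lambda>m. 1 + (\<Sum>i<m. tso_step i a)) \<longlonglongrightarrow> tso_limit a"
    unfolding tso_limit_def by (intro tendsto_add tendsto_const summable_LIMSEQ)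
  moreover have "tso_weight m a = 1 + (\<Sum>i<m. tso_step i a)" for m
    by (induction m) (simp_all add: tso_step_def tso_weight_def)
  ultimately show ?thesis by simp
qed

lemma tso_limit_equation:
  assumes a: "0 \<le> a" "a \<le> 1"
  shows "tso_limit a = (a/2) * tso_limit a + coef_b a * tso_limit (a/2) + coef_c a"
proof (rule LIMSEQ_unique)
  show "(\<lambda>m. tso_weight (Suc m) a) \<longlonglongrightarrow> tso_limit a"
    using tso_weight_limit[OF a] by (rule LIMSEQ_Suc)
  have "(\<lambda>m. (a/2) * tso_weight m a + coef_b a * tso_weight m (a/2) + coef_c a)
          \<longlonglongrightarrow> (a/2) * tso_limit a + coef_b a * tso_limit (a/2) + coef_c a"
    using a by (intro tendsto_intros tso_weight_limit) auto
  then show "(\<lambda>m. tso_weight (Suc m) a) \<longlonglongrightarrow> (a/2) * tso_limit a + coef_b a * tso_limit (a/2) + coef_c a"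
    using a by (simp add: tso_weight_Suc)
qed

lemma tso_limit_bounds: "0 \<le> a \<Longrightarrow> a \<le> 1 \<Longrightarrow> 0 \<le> tso_limit a \<and> tso_limit a \<le> 1"
  using LIMSEQ_le_const[OF tso_weight_limit] LIMSEQ_le_const2[OF tso_weight_limit]
    tso_weight_bounds by meson

text \<open>Two steps of the functional equation, with the crude bound
  [0 \<le> tso_limit (1/16) \<le> 1], pin down [tso_limit (1/4)].\<close>
lemma tso_limit_quarter: "18/49 < tso_limit (1/4) \<and> tso_limit (1/4) < 18/49 + 2/21"
proof -
  have "tso_limit (1/4) = (1/8) * tso_limit (1/4) + (3/14) * tso_limit (1/8) + 2/7"
    using tso_limit_equation[of "1/4"] by (simp add: coef_b_def coef_c_def)
  moreover have "tso_limit (1/8) = (1/16) * tso_limit (1/8) + (7/30) * tso_limit (1/16) + 4/15"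
    using tso_limit_equation[of "1/8"] by (simp add: coef_b_def coef_c_def)
  moreover have "0 \<le> tso_limit (1/16) \<and> tso_limit (1/16) \<le> 1" by (rule tso_limit_bounds) auto
  ultimately show ?thesis by linarith
qed

text \<open>Under TSO the critical store never moves, and the critical load passes
  [k] of the [s] trailing stores, so [E[2^-gap] = E[2^-k] = 2/3 + (1/3) 4^-s].\<close>
lemma gap_weight_TSO:
  assumes len: "length xs = m"
  shows "gap_weight TSO m xs = trailing_mean xs (\<lambda>s. (1/3) * (1/4) ^ s + 2/3)"
proof -
  have type: "prog_type m xs i = prefix_type xs i" if "i < m" for i
    using that len by (simp add: prog_type_def prefix_type_def)
  have same_prefix: "settle (can_swap TSO m xs) m = settle (tso_can xs) m"
  proof (rule settle_cong)
    fix y x :: nat assume "y < x" "x < m"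
    then show "can_swap TSO m xs y x = tso_can xs y x"
      by (simp add: can_swap_def tso_can_def type)
  qed
  have "last_rounds_mean (can_swap TSO m xs) m (\<lambda>d. (1/2) ^ d) (rev pre)
        = (1/3) * (1/4) ^ trailing_stores xs pre + 2/3"
    if pre: "pre \<in> set_pmf (settle (tso_can xs) m)" for pre
  proof -
    have "set (rev pre) = {..<m}" using set_settle[OF pre] by simp
    then have "takeWhile (\<lambda>y. can_swap TSO m xs y m) (rev pre)
             = takeWhile (\<lambda>y. prefix_type xs y = ST) (rev pre)"
      by (intro takeWhile_cong) (auto simp: can_swap_def type prog_type_def[of m xs m])
    moreover have "takeWhile (\<lambda>y. can_swap TSO m xs y (Suc m)) L = []" for L
      by (simp add: can_swap_def prog_type_def)
    moreover have "trunc_mean s (\<lambda>k. (1/2::real) ^ k) = (1/3) * (1/4) ^ s + 2/3" for s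
      by (simp add: trunc_mean_power)
    ultimately show ?thesis by (simp add: last_rounds_mean_def trailing_stores_def)
  qed
  then show ?thesis
    unfolding gap_weight_last_rounds same_prefix trailing_mean_def len
    by (rule integral_cong_pmf)
qed

lemma prob_A_TSO: "prob_A TSO m 2 = ((1/3) * tso_weight m (1/4) + 2/3) / 6"
proof -
  have "(\<integral>xs. gap_weight TSO m xs \<partial>random_prog m)
      = prog_trailing_mean m (\<lambda>s. (1/3) * (1/4) ^ s + 2/3)"
    unfolding random_prog_def coin_def[symmetric] prog_trailing_mean_def
    by (rule integral_cong_pmf) (simp add: gap_weight_TSO set_replicate_pmf)
  also have "\<dots> = (1/3) * tso_weight m (1/4) + 2/3"
    by (simp only: prog_trailing_mean_iterate round_op_iterate_affine tso_weight_def)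
  finally show ?thesis by (simp add: prob_A_two_threads)
qed

lemma prob_A_TSO_limit:
  "\<exists>L. ((\<lambda>m. prob_A TSO m 2) \<longlonglongrightarrow> L) \<and> 58/441 < L \<and> L < 58/441 + 1/189"
proof (intro exI conjI)
  show "(\<lambda>m. prob_A TSO m 2) \<longlonglongrightarrow> ((1/3) * tso_limit (1/4) + 2/3) / 6"
    unfolding prob_A_TSO by (intro tendsto_intros tso_weight_limit) auto
  show "58/441 < ((1/3) * tso_limit (1/4) + 2/3) / 6"
       "((1/3) * tso_limit (1/4) + 2/3) / 6 < 58/441 + 1/189"
    using tso_limit_quarter by simp_all
qed

theorem theorem4:
  shows "((\<lambda>m. prob_A SC m 2) \<longlonglongrightarrow> 1/6) \<and>
         ((\<lambda>m. prob_A WO m 2) \<longlonglongrightarrow> 7/54) \<and>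
         (\<exists>L. ((\<lambda>m. prob_A TSO m 2) \<longlonglongrightarrow> L) \<and> 58/441 < L \<and> L < 58/441 + 1/189)"
  using prob_A_SC prob_A_WO_limit prob_A_TSO_limit by (simp only: tendsto_const)

end
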